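(* Let $s\ge1$ and $n\ge k\ge0$ be integers, $\mathcal A$ a linear $[n,k]_q$ code, and $A_n^{\mathcal A}$ the number of codewords of $\mathcal A$ of Hamming weight $n$. Let $\boldsymbol E$ be chosen uniformly at random from the set of matrices in $\mathbb F_q^{s\times n}$ having no all-zero column. Then $$\Pr\{\text{every row of }\boldsymbol E\text{ lies in }\mathcal A\}\le\frac{q^{ks}(q-1)-(q^s-1)(q^k-1-A_n^{\mathcal A})-(q-1)}{(q-1)(q^s-1)^n}.$$ *)

theory Defs
  imports "HOL-Analysis.Analysis" "HOL-Probability.Probability"
begin

text \<open>Hamming weight of a vector in F_q^n (index type 'n with CARD('n) = n).\<close>
definition hamming_weight :: "'a::zero ^ 'n \<Rightarrow> nat" where
  "hamming_weight v = card {j. v $ j \<noteq> 0}"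

definition linear_code :: "('a::field ^ 'n) set \<Rightarrow> nat \<Rightarrow> bool" where
  "linear_code C k \<longleftrightarrow> vec.subspace C \<and> vec.dim C = k"

definition full_weight_count :: "('a::field ^ 'n::finite) set \<Rightarrow> nat" where
  "full_weight_count C = card {v \<in> C. hamming_weight v = CARD('n)}"

text \<open>s x n matrices (rows indexed by 's, columns by 'n) with no all-zero column.\<close>
definition no_zero_column_matrices :: "('a::zero ^ 'n ^ 's) set" where
  "no_zero_column_matrices = {E. \<forall>j. \<exists>i. E $ i $ j \<noteq> 0}"

end

theory Submission
  imports Defs
begin

(* If every row of E lies in the code, the event "E has a zero column" contains the zero matrix
   and every rank-one matrix a c^T with a <> 0 and c a nonzero codeword of weight below n.
   A rank-one matrix determines (a, c) up to a nonzero scalar, so there are at least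
   (q^s - 1)(q^k - 1 - A_n) / (q - 1) such matrices. Removing them and the zero matrix from the
   q^(ks) matrices with rows in the code, and dividing by the (q^s - 1)^n matrices without a
   zero column, gives the bound. *)

lemma card_le_mult_card_image:
  assumes "finite A" and "\<And>y. y \<in> f ` A \<Longrightarrow> card {x \<in> A. f x = y} \<le> m"
  shows "card A \<le> m * card (f ` A)"
proof -
  have "card A = card (\<Union>y\<in>f ` A. {x \<in> A. f x = y})"
    by (rule arg_cong[where f = card]) auto
  also have "\<dots> \<le> (\<Sum>y\<in>f ` A. card {x \<in> A. f x = y})"
    using assms(1) by (intro card_UN_le) simp
  also have "\<dots> \<le> (\<Sum>y\<in>f ` A. m)"
    by (rule sum_mono) (rule assms(2))
  finally show ?thesis by (simp add: mult.commute)
qed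

lemma card_vec_components_in:
  fixes A :: "'b set"
  assumes "finite A"
  shows "card {v :: 'b ^ 'm::finite. \<forall>i. v $ i \<in> A} = card A ^ CARD('m)"
proof -
  have "bij_betw vec_nth {v :: 'b ^ 'm. \<forall>i. v $ i \<in> A} (PiE UNIV (\<lambda>_. A))"
    by (intro bij_betwI[of _ _ _ vec_lambda]) (auto simp: vec_eq_iff)
  then have "card {v :: 'b ^ 'm. \<forall>i. v $ i \<in> A} = card (PiE (UNIV :: 'm set) (\<lambda>_. A))"
    by (rule bij_betw_same_card)
  then show ?thesis by (simp add: card_PiE)
qed

lemma card_field_ge_2: "card (UNIV :: 'a::{field,finite} set) \<ge> 2"
proof -
  have "card {0::'a, 1} \<le> CARD('a)" by (intro card_mono) auto
  then show ?thesis by simp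
qed

context vector_space
begin

lemma card_span_independent:
  assumes "finite (UNIV :: 'a set)" and "finite B" and "independent B"
  shows "card (span B) = card (UNIV :: 'a set) ^ card B"
proof -
  define comb where "comb u = (\<Sum>v\<in>B. scale (u v) v)" for u
  have "inj_on comb (PiE B (\<lambda>_. UNIV))"
  proof (rule inj_onI)
    fix u w assume u: "u \<in> PiE B (\<lambda>_. UNIV)" and w: "w \<in> PiE B (\<lambda>_. UNIV)"
      and "comb u = comb w"
    then have "(\<Sum>v\<in>B. scale (u v - w v) v) = 0"
      by (simp add: comb_def scale_left_diff_distrib sum_subtractf)
    then have "u v - w v = 0" if "v \<in> B" for v
      using independentD[OF assms(3) assms(2) order_refl, where u = "\<lambda>v. u v - w v"] that
      by simp
    then show "u = w" using u w by (auto intro: PiE_ext)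
  qed
  moreover have "comb ` PiE B (\<lambda>_. UNIV) = span B"
  proof
    show "comb ` PiE B (\<lambda>_. UNIV) \<subseteq> span B"
      using span_finite[OF assms(2)] by (auto simp: comb_def)
    show "span B \<subseteq> comb ` PiE B (\<lambda>_. UNIV)"
    proof
      fix x assume "x \<in> span B"
      then obtain u where x: "x = (\<Sum>v\<in>B. scale (u v) v)"
        using span_finite[OF assms(2)] by auto
      have "comb (restrict u B) = x" unfolding comb_def x by (rule sum.cong) auto
      then show "x \<in> comb ` PiE B (\<lambda>_. UNIV)" by force
    qed
  qed
  ultimately have "card (span B) = card (PiE B (\<lambda>_. UNIV :: 'a set))"
    by (metis card_image)
  then show ?thesis using assms(2) by (simp add: card_PiE)
qed

end

lemma card_vec_subspace:
  fixes C :: "('a::{field,finite} ^ 'n::finite) set"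
  assumes "vec.subspace C"
  shows "card C = CARD('a) ^ vec.dim C"
proof -
  obtain B where B: "B \<subseteq> C" "vec.independent B" "C \<subseteq> vec.span B" "card B = vec.dim C"
    using vec.basis_exists by blast
  have "C = vec.span B" using B assms vec.span_minimal by blast
  also have "card \<dots> = CARD('a) ^ card B"
    using B(2) vec.finiteI_independent by (intro vec.card_span_independent) simp_all
  finally show ?thesis using B(4) by simp
qed

lemma card_no_zero_column_matrices:
  "card (no_zero_column_matrices :: ('a::{zero,finite} ^ 'n::finite ^ 's::finite) set)
     = (CARD('a) ^ CARD('s) - 1) ^ CARD('n)"
proof -
  let ?Z = "UNIV - {0} :: ('a ^ 's) set"
  have "bij_betw transpose (no_zero_column_matrices :: ('a ^ 'n ^ 's) set) {T. \<forall>j. T $ j \<in> ?Z}"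
    by (intro bij_betwI[of _ _ _ transpose])
      (auto simp: no_zero_column_matrices_def transpose_def vec_eq_iff)
  then have "card (no_zero_column_matrices :: ('a ^ 'n ^ 's) set)
               = card {T :: 'a ^ 's ^ 'n. \<forall>j. T $ j \<in> ?Z}"
    by (rule bij_betw_same_card)
  also have "\<dots> = card ?Z ^ CARD('n)"
    by (rule card_vec_components_in) simp
  finally show ?thesis by (simp add: card_Diff_singleton)
qed

definition outer_prod :: "'a::times ^ 's \<Rightarrow> 'a ^ 'n \<Rightarrow> 'a ^ 'n ^ 's" where
  "outer_prod a c = (\<chi> i j. a $ i * c $ j)"

lemma outer_prod_nth [simp]: "outer_prod a c $ i $ j = a $ i * c $ j"
  by (simp add: outer_prod_def)

lemma outer_prod_eq_0_iff [simp]: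
  fixes a :: "'a::semiring_no_zero_divisors ^ 's" and c :: "'a ^ 'n"
  shows "outer_prod a c = 0 \<longleftrightarrow> a = 0 \<or> c = 0"
  by (auto simp: vec_eq_iff)

lemma outer_prod_eq_imp_rescaled:
  fixes a a' :: "'a::field ^ 's" and c c' :: "'a ^ 'n"
  assumes "a \<noteq> 0" "c \<noteq> 0" "outer_prod a' c' = outer_prod a c"
  shows "\<exists>l. l \<noteq> 0 \<and> a' = l *s a \<and> c' = inverse l *s c"
proof -
  have entry: "a' $ i * c' $ j = a $ i * c $ j" for i j
    using assms(3) by (metis outer_prod_nth)
  obtain i where i: "a $ i \<noteq> 0" using assms(1) by (metis vec_eq_iff zero_index)
  obtain j where j: "c $ j \<noteq> 0" using assms(2) by (metis vec_eq_iff zero_index)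
  have c'j: "c' $ j \<noteq> 0" using entry[of i j] i j by auto
  define l where "l = c $ j / c' $ j"
  have l: "l \<noteq> 0" using j c'j by (simp add: l_def)
  have a': "a' = l *s a"
    unfolding vec_eq_iff using entry[of _ j] c'j by (simp add: l_def field_simps)
  have "c' $ t = inverse l * c $ t" for t
    using entry[of i t] i l by (simp add: a' field_simps)
  then have "c' = inverse l *s c" by (simp add: vec_eq_iff)
  with l a' show ?thesis by blast
qed

lemma card_outer_prod_fibre:
  fixes a :: "'a::{field,finite} ^ 's::finite" and c :: "'a ^ 'n::finite"
  assumes "a \<noteq> 0" "c \<noteq> 0"
  shows "card {x. case_prod outer_prod x = outer_prod a c} \<le> CARD('a) - 1"
proof -
  have "{x. case_prod outer_prod x = outer_prod a c}
          \<subseteq> (\<lambda>l. (l *s a, inverse l *s c)) ` (UNIV - {0})"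
    using outer_prod_eq_imp_rescaled[OF assms] by fastforce
  then have "card {x. case_prod outer_prod x = outer_prod a c} \<le> card (UNIV - {0 :: 'a})"
    by (meson card_image_le card_mono finite order_trans)
  then show ?thesis by simp
qed

lemma card_rank_one_matrices_ge:
  fixes F :: "('a::{field,finite} ^ 'n::finite) set"
  assumes "0 \<notin> F"
  shows "(CARD('a) ^ CARD('s) - 1) * card F
           \<le> (CARD('a) - 1) * card (case_prod outer_prod ` ((UNIV - {0 :: 'a ^ 's::finite}) \<times> F))"
proof -
  let ?D = "(UNIV - {0 :: 'a ^ 's}) \<times> F"
  have "card {x \<in> ?D. case_prod outer_prod x = y} \<le> CARD('a) - 1"
    if y: "y \<in> case_prod outer_prod ` ?D" for y
  proof -
    obtain a c where "a \<noteq> 0" "c \<in> F" and y: "y = outer_prod a c" using y by fastforce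
    moreover have "c \<noteq> 0" using \<open>c \<in> F\<close> assms by blast
    ultimately have "card {x. case_prod outer_prod x = y} \<le> CARD('a) - 1"
      using card_outer_prod_fibre[of a c] y by simp
    moreover have "card {x \<in> ?D. case_prod outer_prod x = y} \<le> card {x. case_prod outer_prod x = y}"
      by (intro card_mono) auto
    ultimately show ?thesis by linarith
  qed
  then have "card ?D \<le> (CARD('a) - 1) * card (case_prod outer_prod ` ?D)"
    by (intro card_le_mult_card_image) simp_all
  then show ?thesis by (simp add: card_cartesian_product)
qed

lemma card_code_matrices_with_zero_column:
  fixes C :: "('a::{field,finite} ^ 'n::finite) set"
  assumes "vec.subspace C"
  defines "F \<equiv> {c \<in> C. c \<noteq> 0 \<and> hamming_weight c \<noteq> CARD('n)}"
  shows "card (case_prod outer_prod ` ((UNIV - {0 :: 'a ^ 's::finite}) \<times> F)) + 1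
           \<le> card ({E :: 'a ^ 'n ^ 's. \<forall>i. E $ i \<in> C} - no_zero_column_matrices)"
proof -
  let ?M = "case_prod outer_prod ` ((UNIV - {0 :: 'a ^ 's}) \<times> F)"
  let ?bad = "{E :: 'a ^ 'n ^ 's. \<forall>i. E $ i \<in> C} - no_zero_column_matrices"
  have "?M \<subseteq> ?bad"
  proof
    fix E assume "E \<in> ?M"
    then obtain a c where E: "E = outer_prod a c" and c: "c \<in> F" by auto
    have "E $ i = a $ i *s c" for i by (simp add: E vec_eq_iff)
    then have rows: "\<forall>i. E $ i \<in> C" using c assms(1) by (simp add: F_def vec.subspace_scale)
    have "{j. c $ j \<noteq> 0} \<noteq> UNIV" using c by (auto simp: F_def hamming_weight_def)
    then obtain j where "c $ j = 0" by auto
    then have "E \<notin> no_zero_column_matrices" by (auto simp: E no_zero_column_matrices_def)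
    with rows show "E \<in> ?bad" by blast
  qed
  moreover have "0 \<in> ?bad"
    using assms(1) by (simp add: no_zero_column_matrices_def vec.subspace_0)
  moreover have "0 \<notin> ?M" by (auto simp: F_def)
  ultimately have "insert 0 ?M \<subseteq> ?bad"
    by blast
  then have "card (insert 0 ?M) \<le> card ?bad"
    by (intro card_mono) simp_all
  with \<open>0 \<notin> ?M\<close> show ?thesis by simp
qed

lemma card_codewords_nonzero_not_full_weight:
  fixes C :: "('a::{field,finite} ^ 'n::finite) set"
  assumes "vec.subspace C"
  shows "card {c \<in> C. c \<noteq> 0 \<and> hamming_weight c \<noteq> CARD('n)} + full_weight_count C + 1 = card C"
proof -
  let ?F = "{c \<in> C. c \<noteq> 0 \<and> hamming_weight c \<noteq> CARD('n)}"
  let ?W = "{v \<in> C. hamming_weight v = CARD('n)}"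
  have "0 \<notin> ?W" by (simp add: hamming_weight_def)
  have "C = ?F \<union> insert 0 ?W" using vec.subspace_0[OF assms] by auto
  then have "card C = card (?F \<union> insert 0 ?W)" by (rule arg_cong[where f = card])
  also have "\<dots> = card ?F + card (insert 0 ?W)" by (rule card_Un_disjoint) auto
  also have "\<dots> = card ?F + full_weight_count C + 1"
    using \<open>0 \<notin> ?W\<close> by (simp add: full_weight_count_def)
  finally show ?thesis by simp
qed

lemma card_code_matrices_no_zero_column_le:
  fixes C :: "('a::{field,finite} ^ 'n::finite) set"
  assumes "vec.subspace C"
  defines "F \<equiv> {c \<in> C. c \<noteq> 0 \<and> hamming_weight c \<noteq> CARD('n)}"
  shows "(CARD('a) - 1) * card (no_zero_column_matrices \<inter> {E :: 'a ^ 'n ^ 's::finite. \<forall>i. E $ i \<in> C})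
           + (CARD('a) ^ CARD('s) - 1) * card F + (CARD('a) - 1)
         \<le> (CARD('a) - 1) * card C ^ CARD('s)"
proof -
  let ?R = "{E :: 'a ^ 'n ^ 's. \<forall>i. E $ i \<in> C}"
  let ?M = "case_prod outer_prod ` ((UNIV - {0 :: 'a ^ 's}) \<times> F)"
  let ?good = "card (no_zero_column_matrices \<inter> ?R)"
  have rank_one: "(CARD('a) ^ CARD('s) - 1) * card F \<le> (CARD('a) - 1) * card ?M"
    by (rule card_rank_one_matrices_ge) (simp add: F_def)
  have zero_column: "card ?M + 1 \<le> card (?R - no_zero_column_matrices)"
    using card_code_matrices_with_zero_column[OF assms(1)] by (simp add: F_def)
  have "(CARD('a) - 1) * ?good + (CARD('a) ^ CARD('s) - 1) * card F + (CARD('a) - 1)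
          \<le> (CARD('a) - 1) * (?good + (card ?M + 1))"
    using rank_one by (simp only: add_mult_distrib2 mult_1_right)
  also have "\<dots> \<le> (CARD('a) - 1) * (?good + card (?R - no_zero_column_matrices))"
    using zero_column by (intro mult_le_mono2) simp
  also have "\<dots> = (CARD('a) - 1) * card C ^ CARD('s)"
    using card_Int_Diff[of ?R no_zero_column_matrices]
    by (simp add: Int_commute card_vec_components_in)
  finally show ?thesis .
qed

lemma card_code_matrices_no_zero_column_bound:
  fixes C :: "('a::{field,finite} ^ 'n::finite) set"
  assumes "vec.subspace C"
  defines "q \<equiv> real CARD('a)" and "s \<equiv> CARD('s::finite)" and "k \<equiv> vec.dim C"
  shows "(q - 1) * card (no_zero_column_matrices \<inter> {E :: 'a ^ 'n ^ 's. \<forall>i. E $ i \<in> C})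
         \<le> q ^ (k * s) * (q - 1) - (q ^ s - 1) * (q ^ k - 1 - real (full_weight_count C)) - (q - 1)"
proof -
  define P where "P = card (no_zero_column_matrices \<inter> {E :: 'a ^ 'n ^ 's. \<forall>i. E $ i \<in> C})"
  define f where "f = card {c \<in> C. c \<noteq> 0 \<and> hamming_weight c \<noteq> CARD('n)}"
  have card_C: "card C = CARD('a) ^ k" using assms(1) by (simp add: k_def card_vec_subspace)
  have "1 \<le> CARD('a)" and "1 \<le> CARD('a) ^ s" by (simp_all add: Suc_leI)
  have "(CARD('a) - 1) * P + (CARD('a) ^ s - 1) * f + (CARD('a) - 1) \<le> (CARD('a) - 1) * CARD('a) ^ (k * s)"
    using card_code_matrices_no_zero_column_le[OF assms(1), where 's = 's] card_C
    by (simp add: P_def f_def s_def power_mult)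
  then have "real ((CARD('a) - 1) * P + (CARD('a) ^ s - 1) * f + (CARD('a) - 1))
               \<le> real ((CARD('a) - 1) * CARD('a) ^ (k * s))"
    by (rule of_nat_mono)
  then have bound: "(q - 1) * P + (q ^ s - 1) * f + (q - 1) \<le> (q - 1) * q ^ (k * s)"
    using \<open>1 \<le> CARD('a) ^ s\<close> \<open>1 \<le> CARD('a)\<close>
    by (simp only: q_def of_nat_add of_nat_mult of_nat_diff of_nat_power of_nat_1)
  have "f + full_weight_count C + 1 = CARD('a) ^ k"
    using card_codewords_nonzero_not_full_weight[OF assms(1)] card_C by (simp add: f_def)
  then have "real f + real (full_weight_count C) + 1 = q ^ k"
    unfolding q_def by (metis of_nat_1 of_nat_add of_nat_power)
  then have f: "real f = q ^ k - 1 - real (full_weight_count C)" by simp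
  show ?thesis
    using bound unfolding f P_def by (simp only: mult.commute[of "q ^ (k * s)"])
qed

theorem mainTheorem18:
  fixes C :: "('a::{field,finite} ^ 'n::finite) set"
    and k :: nat
  assumes "linear_code C k"
  defines "q \<equiv> real CARD('a)"
    and "s \<equiv> CARD('s::finite)"
    and "n \<equiv> CARD('n)"
  shows "measure_pmf.prob (pmf_of_set (no_zero_column_matrices :: ('a ^ 'n ^ 's) set))
           {E. \<forall>i. E $ i \<in> C}
         \<le> (q ^ (k * s) * (q - 1) - (q ^ s - 1) * (q ^ k - 1 - real (full_weight_count C)) - (q - 1))
           / ((q - 1) * (q ^ s - 1) ^ n)"
proof -
  have sub: "vec.subspace C" and k: "k = vec.dim C" using assms(1) by (auto simp: linear_code_def)
  define P where "P = card (no_zero_column_matrices \<inter> {E :: 'a ^ 'n ^ 's. \<forall>i. E $ i \<in> C})"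
  have q: "q \<ge> 2" using card_field_ge_2 by (simp add: q_def)
  have "1 \<le> CARD('a) ^ s" by (simp add: Suc_leI)
  then have card_NZ: "real (card (no_zero_column_matrices :: ('a ^ 'n ^ 's) set)) = (q ^ s - 1) ^ n"
    by (simp add: card_no_zero_column_matrices q_def s_def n_def of_nat_diff)
  have "q ^ s - 1 > 0" using q by (simp add: s_def one_less_power)
  then have "(q ^ s - 1) ^ n > 0" by simp
  then have "no_zero_column_matrices \<noteq> ({} :: ('a ^ 'n ^ 's) set)"
    using card_NZ by (metis card.empty less_irrefl of_nat_0)
  then have "measure_pmf.prob (pmf_of_set (no_zero_column_matrices :: ('a ^ 'n ^ 's) set))
               {E. \<forall>i. E $ i \<in> C} = (q - 1) * P / ((q - 1) * (q ^ s - 1) ^ n)"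
    using q card_NZ by (simp add: measure_pmf_of_set P_def)
  also have "\<dots> \<le> (q ^ (k * s) * (q - 1) - (q ^ s - 1) * (q ^ k - 1 - real (full_weight_count C)) - (q - 1))
           / ((q - 1) * (q ^ s - 1) ^ n)"
    using card_code_matrices_no_zero_column_bound[OF sub, where 's = 's] q \<open>(q ^ s - 1) ^ n > 0\<close>
    by (intro divide_right_mono) (simp_all add: P_def q_def s_def k)
  finally show ?thesis .
qed

end
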